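(* Assume $C(u,v)\equiv C>0$ for $u,v\in\{x,y\}$, $\beta=0$ and $\mu=1$. Then the system $\dot n^x=P(n^x,n^y)$, $\dot n^y=Q(n^x,n^y)$ has no fixed point in $(0,\infty)^2$, and for every initial condition in $(0,\infty)^2$ the solution converges to $(0,r(y)/C)$ if $S(y;x)>0$ and to $(r(x)/C,0)$ if $S(y;x)<0$, where here $S(y;x)=r(y)-r(x)+\alpha(y,x)=-S(x;y)$.
   Context: Let $r(x),r(y)>0$, $\alpha(u,v)=\tau(u,v)-\tau(v,u)$ with $\tau\ge0$, and $$P(u,v)=\Big(r(x)-Cu-Cv+\frac{\alpha(x,y)}{u+v}v\Big)u,\qquad Q(u,v)=\Big(r(y)-Cu-Cv-\frac{\alpha(x,y)}{u+v}u\Big)v.$$ In general the invasion fitness is $S(y;x)=r(y)-\frac{C(y,x)r(x)}{C(x,x)}+\frac{\alpha(y,x)r(x)}{\beta C(x,x)+\mu r(x)}$, which reduces to $r(y)-r(x)+\alpha(y,x)$ in this case. *)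

theory Defs
  imports "HOL-Analysis.Analysis"
begin

definition alpha :: "('a \<Rightarrow> 'a \<Rightarrow> real) \<Rightarrow> 'a \<Rightarrow> 'a \<Rightarrow> real" where
  "alpha tau u v = tau u v - tau v u"

definition invasion_fitness ::
  "('a \<Rightarrow> real) \<Rightarrow> ('a \<Rightarrow> 'a \<Rightarrow> real) \<Rightarrow> ('a \<Rightarrow> 'a \<Rightarrow> real) \<Rightarrow> real \<Rightarrow> real \<Rightarrow> 'a \<Rightarrow> 'a \<Rightarrow> real"
  where
  "invasion_fitness r Cf tau \<beta> \<mu> y x =
     r y - Cf y x * r x / Cf x x + alpha tau y x * r x / (\<beta> * Cf x x + \<mu> * r x)"

definition Pfun :: "('a \<Rightarrow> real) \<Rightarrow> real \<Rightarrow> ('a \<Rightarrow> 'a \<Rightarrow> real) \<Rightarrow> 'a \<Rightarrow> 'a \<Rightarrow> real \<Rightarrow> real \<Rightarrow> real"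
  where
  "Pfun r C tau x y u v = (r x - C * u - C * v + alpha tau x y / (u + v) * v) * u"

definition Qfun :: "('a \<Rightarrow> real) \<Rightarrow> real \<Rightarrow> ('a \<Rightarrow> 'a \<Rightarrow> real) \<Rightarrow> 'a \<Rightarrow> 'a \<Rightarrow> real \<Rightarrow> real \<Rightarrow> real"
  where
  "Qfun r C tau x y u v = (r y - C * u - C * v - alpha tau x y / (u + v) * u) * v"

definition is_solution ::
  "('a \<Rightarrow> real) \<Rightarrow> real \<Rightarrow> ('a \<Rightarrow> 'a \<Rightarrow> real) \<Rightarrow> 'a \<Rightarrow> 'a \<Rightarrow> (real \<Rightarrow> real) \<Rightarrow> (real \<Rightarrow> real) \<Rightarrow> bool"
  where
  "is_solution r C tau x y nx ny \<longleftrightarrow>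
     (\<forall>t\<ge>0. (nx has_real_derivative Pfun r C tau x y (nx t) (ny t)) (at t within {0..}) \<and>
             (ny has_real_derivative Qfun r C tau x y (nx t) (ny t)) (at t within {0..}))"

end

theory Submission
  imports Defs "HOL-Real_Asymp.Real_Asymp"
begin

text \<open>The interaction terms of P and Q cancel in the total N = n^x + n^y, and divided by
the population sizes they differ by the constant alpha(x,y). Hence
(ln (n^x / n^y))' = r(x) - r(y) + alpha(x,y) = -S(y;x), which rules out interior equilibria and
makes the ratio n^x / n^y decay (or grow) exponentially. Meanwhile 1/N solves the linear equation
z' = C - rho(t) z, where rho is the population-weighted growth rate; rho tends to the growth rate
of the winning type, so N tends to its carrying capacity r/C.\<close>

lemma deriv_nonneg_imp_le_halfline:
  fixes f f' :: "real \<Rightarrow> real"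
  assumes "0 \<le> a" "a \<le> b"
    and deriv: "\<And>t. a \<le> t \<Longrightarrow> t \<le> b \<Longrightarrow> (f has_real_derivative f' t) (at t within {0..})"
    and nonneg: "\<And>t. a < t \<Longrightarrow> t < b \<Longrightarrow> f' t \<ge> 0"
  shows "f a \<le> f b"
proof (rule DERIV_nonneg_imp_increasing_open[OF assms(2)])
  fix t assume t: "a < t" "t < b"
  have "at t within {0..} = at t"
    using t assms(1) by (intro at_within_interior) simp
  with deriv[of t] nonneg[OF t] t show "\<exists>y. (f has_real_derivative y) (at t) \<and> 0 \<le> y" by auto
next
  show "continuous_on {a..b} f"
    unfolding continuous_on_eq_continuous_within
  proof
    fix t assume t: "t \<in> {a..b}"
    have "continuous (at t within {0..}) f" using deriv[of t] t by (auto intro: DERIV_continuous)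
    then show "continuous (at t within {a..b}) f"
      by (rule continuous_within_subset) (use assms(1) in auto)
  qed
qed

text \<open>With g \<ge> -K the function u(t) exp(K t) is nondecreasing as long as u > 0.\<close>
lemma pos_of_growth_rate_bounded_below:
  fixes u g :: "real \<Rightarrow> real"
  assumes "0 \<le> T" "u 0 > 0"
    and deriv: "\<And>t. 0 \<le> t \<Longrightarrow> t \<le> T \<Longrightarrow> (u has_real_derivative g t * u t) (at t within {0..})"
    and pos: "\<And>t. 0 < t \<Longrightarrow> t < T \<Longrightarrow> u t > 0"
    and bound: "\<And>t. 0 < t \<Longrightarrow> t < T \<Longrightarrow> g t \<ge> - K"
  shows "u T > 0"
proof -
  have "u 0 * exp (K * 0) \<le> u T * exp (K * T)"
  proof (rule deriv_nonneg_imp_le_halfline[OF order_refl \<open>0 \<le> T\<close>])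
    fix t assume "0 \<le> t" "t \<le> T"
    then show "((\<lambda>t. u t * exp (K * t)) has_real_derivative (g t + K) * u t * exp (K * t))
        (at t within {0..})"
      using deriv[of t] by (auto intro!: derivative_eq_intros simp: algebra_simps)
  next
    fix t assume "0 < t" "t < T"
    then show "(g t + K) * u t * exp (K * t) \<ge> 0"
      using pos[of t] bound[of t] by simp
  qed
  with \<open>u 0 > 0\<close> have "u T * exp (K * T) > 0" by simp
  then show ?thesis by (simp add: zero_less_mult_iff)
qed

lemma linear_diff_ineq_bound:
  fixes e e' :: "real \<Rightarrow> real"
  assumes "0 \<le> t0" "m > 0"
    and deriv: "\<And>t. t \<ge> t0 \<Longrightarrow> (e has_real_derivative e' t) (at t within {0..})"
    and ineq: "\<And>t. t \<ge> t0 \<Longrightarrow> e' t \<le> - m * e t + c"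
    and "t \<ge> t0"
  shows "e t \<le> c / m + (e t0 - c / m) * exp (- m * (t - t0))"
proof -
  have "- (e t0 - c / m) * exp (m * t0) \<le> - (e t - c / m) * exp (m * t)"
  proof (rule deriv_nonneg_imp_le_halfline[OF \<open>0 \<le> t0\<close> \<open>t \<ge> t0\<close>])
    fix s assume "t0 \<le> s" "s \<le> t"
    then show "((\<lambda>s. - (e s - c / m) * exp (m * s)) has_real_derivative
        - (e' s + m * e s - c) * exp (m * s)) (at s within {0..})"
      using deriv[of s] \<open>m > 0\<close>
      by (auto intro!: derivative_eq_intros simp: algebra_simps)
  next
    fix s assume "t0 < s" "s < t"
    then show "- (e' s + m * e s - c) * exp (m * s) \<ge> 0"
      using ineq[of s] by (simp add: mult_nonpos_nonneg)
  qed
  then have "(e t - c / m) * exp (m * t) \<le> (e t0 - c / m) * exp (m * t0)"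
    by (simp add: algebra_simps)
  then have "e t - c / m \<le> (e t0 - c / m) * (exp (m * t0) / exp (m * t))"
    by (simp add: pos_le_divide_eq)
  also have "exp (m * t0) / exp (m * t) = exp (- m * (t - t0))"
    by (simp add: exp_diff[symmetric] algebra_simps)
  finally show ?thesis by simp
qed

lemma linear_diff_ineq_eventually_less:
  fixes e e' :: "real \<Rightarrow> real"
  assumes "0 \<le> t0" "m > 0" "\<epsilon> > 0"
    and "\<And>t. t \<ge> t0 \<Longrightarrow> (e has_real_derivative e' t) (at t within {0..})"
    and "\<And>t. t \<ge> t0 \<Longrightarrow> e' t \<le> - m * e t + c"
  shows "\<forall>\<^sub>F t in at_top. e t < c / m + \<epsilon>"
proof -
  have "((\<lambda>t. (e t0 - c / m) * exp (- m * (t - t0))) \<longlongrightarrow> 0) at_top"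
    using \<open>m > 0\<close> by real_asymp
  then have "\<forall>\<^sub>F t in at_top. (e t0 - c / m) * exp (- m * (t - t0)) < \<epsilon>"
    using \<open>\<epsilon> > 0\<close> by (rule order_tendstoD)
  moreover have "\<forall>\<^sub>F t in at_top. t \<ge> t0" by (rule eventually_ge_at_top)
  ultimately show ?thesis
  proof eventually_elim
    case (elim t)
    then show ?case using linear_diff_ineq_bound[OF assms(1,2,4,5) elim(2)] by linarith
  qed
qed

lemma tendsto_of_linear_ode:
  fixes z \<rho> :: "real \<Rightarrow> real"
  assumes "L > 0" and rho: "(\<rho> \<longlongrightarrow> L) at_top"
    and pos: "\<And>t. t \<ge> 0 \<Longrightarrow> z t > 0"
    and deriv: "\<And>t. t \<ge> 0 \<Longrightarrow> (z has_real_derivative c - \<rho> t * z t) (at t within {0..})"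
  shows "(z \<longlongrightarrow> c / L) at_top"
proof (rule tendstoI)
  fix \<epsilon> :: real assume "\<epsilon> > 0"
  have "((\<lambda>\<eta>. c / (L - \<eta>)) \<longlongrightarrow> c / (L - 0)) (at_right 0)"
    "((\<lambda>\<eta>. c / (L + \<eta>)) \<longlongrightarrow> c / (L + 0)) (at_right 0)"
    using \<open>L > 0\<close> by (intro tendsto_intros; simp)+
  then have "\<forall>\<^sub>F \<eta> in at_right 0.
      \<eta> < L \<and> c / (L - \<eta>) < c / L + \<epsilon> / 2 \<and> c / L - \<epsilon> / 2 < c / (L + \<eta>)"
    using \<open>L > 0\<close> \<open>\<epsilon> > 0\<close>
    by (intro eventually_conj eventually_at_right_less order_tendstoD) auto
  then obtain \<eta> where \<eta>: "\<eta> > 0" "\<eta> < L"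
    "c / (L - \<eta>) < c / L + \<epsilon> / 2" "c / L - \<epsilon> / 2 < c / (L + \<eta>)"
    unfolding eventually_at_right_field by (metis dense)
  have "\<forall>\<^sub>F t in at_top. \<bar>\<rho> t - L\<bar> < \<eta>"
    using tendstoD[OF rho \<open>\<eta> > 0\<close>] by (simp add: dist_real_def)
  then obtain t1 where t1: "\<And>t. t \<ge> t1 \<Longrightarrow> \<bar>\<rho> t - L\<bar> < \<eta>"
    by (auto simp: eventually_at_top_linorder)
  define t0 where "t0 = max t1 0"
  have "t0 \<ge> 0" by (simp add: t0_def)
  have t0: "\<bar>\<rho> t - L\<bar> < \<eta> \<and> z t > 0" if "t \<ge> t0" for t
    using t1[of t] pos[of t] that by (simp add: t0_def)
  \<comment> \<open>From t0 on, z is squeezed between solutions of z' = c - (L \<mp> \<eta>) z.\<close>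
  have below: "\<forall>\<^sub>F t in at_top. z t < c / (L - \<eta>) + \<epsilon> / 2"
  proof (rule linear_diff_ineq_eventually_less[OF \<open>t0 \<ge> 0\<close>])
    fix t assume t: "t \<ge> t0"
    show "(z has_real_derivative c - \<rho> t * z t) (at t within {0..})"
      using deriv t \<open>t0 \<ge> 0\<close> by simp
    have "(L - \<eta>) * z t \<le> \<rho> t * z t"
      using t0[OF t] by (intro mult_right_mono) auto
    then show "c - \<rho> t * z t \<le> - (L - \<eta>) * z t + c" by (simp add: algebra_simps)
  qed (use \<eta> \<open>\<epsilon> > 0\<close> in simp_all)
  have above: "\<forall>\<^sub>F t in at_top. - z t < (- c) / (L + \<eta>) + \<epsilon> / 2"
  proof (rule linear_diff_ineq_eventually_less[OF \<open>t0 \<ge> 0\<close>])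
    fix t assume t: "t \<ge> t0"
    show "((\<lambda>t. - z t) has_real_derivative - (c - \<rho> t * z t)) (at t within {0..})"
      using DERIV_minus[OF deriv[of t]] t \<open>t0 \<ge> 0\<close> by simp
    have "\<rho> t * z t \<le> (L + \<eta>) * z t"
      using t0[OF t] by (intro mult_right_mono) auto
    then show "- (c - \<rho> t * z t) \<le> - (L + \<eta>) * - z t + - c" by (simp add: algebra_simps)
  qed (use \<eta> \<open>\<epsilon> > 0\<close> in simp_all)
  show "\<forall>\<^sub>F t in at_top. dist (z t) (c / L) < \<epsilon>"
    using below above
  proof eventually_elim
    case (elim t)
    have "(- c) / (L + \<eta>) = - (c / (L + \<eta>))" by simp
    with elim \<eta>(3,4) show ?case unfolding dist_real_def abs_less_iff by linarith
  qed
qed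

lemma tendsto_mult_exp_neg:
  fixes c d :: real
  assumes "d < 0"
  shows "((\<lambda>t. c * exp (d * t)) \<longlongrightarrow> 0) at_top"
  using assms by real_asymp

lemma abs_divide_sum_mult_le:
  fixes s p q :: real
  assumes "p > 0" "q > 0"
  shows "\<bar>s / (p + q) * q\<bar> \<le> \<bar>s\<bar>"
proof -
  have "\<bar>s / (p + q) * q\<bar> = \<bar>s\<bar> * (q / (p + q))"
    using assms by (simp add: abs_mult)
  also have "\<dots> \<le> \<bar>s\<bar>"
    using assms by (intro mult_left_le) auto
  finally show ?thesis .
qed

lemma alpha_swap: "alpha tau y x = - alpha tau x y"
  by (simp add: alpha_def)

lemma Pfun_swap: "Pfun r C tau y x v u = Qfun r C tau x y u v"
  and Qfun_swap: "Qfun r C tau y x v u = Pfun r C tau x y u v"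
  by (simp_all add: Pfun_def Qfun_def alpha_swap[of tau x y] add.commute)

lemma is_solution_swap:
  "is_solution r C tau x y nx ny \<Longrightarrow> is_solution r C tau y x ny nx"
  unfolding is_solution_def by (metis Pfun_swap Qfun_swap)

lemma equilibrium_imp_fitness_zero:
  assumes "u > 0" "v > 0" "Pfun r C tau x y u v = 0" "Qfun r C tau x y u v = 0"
  shows "r x - r y + alpha tau x y = 0"
proof -
  let ?s = "alpha tau x y"
  have "r x - C * u - C * v + ?s / (u + v) * v = 0" "r y - C * u - C * v - ?s / (u + v) * u = 0"
    using assms by (auto simp: Pfun_def Qfun_def)
  moreover have "?s / (u + v) * v + ?s / (u + v) * u = ?s / (u + v) * (u + v)"
    by (simp add: distrib_left)
  moreover have "?s / (u + v) * (u + v) = ?s"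
    using assms by simp
  ultimately show ?thesis by linarith
qed

lemma invasion_fitness_constant_competition:
  assumes "Cf y x = C" "Cf x x = C" "C \<noteq> 0" "r x \<noteq> 0"
  shows "invasion_fitness r Cf tau 0 1 y x = r y - r x + alpha tau y x"
  using assms by (simp add: invasion_fitness_def)

lemma solution_has_derivative:
  assumes "is_solution r C tau x y nx ny" "t \<ge> 0"
  shows "(nx has_real_derivative
      (r x - C * nx t - C * ny t + alpha tau x y / (nx t + ny t) * ny t) * nx t) (at t within {0..})"
    and "(ny has_real_derivative
      (r y - C * nx t - C * ny t - alpha tau x y / (nx t + ny t) * nx t) * ny t) (at t within {0..})"
  using assms unfolding is_solution_def Pfun_def Qfun_def by blast+

lemma solution_continuous:
  assumes "is_solution r C tau x y nx ny"
  shows "continuous_on {0..} nx" "continuous_on {0..} ny"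
  using assms unfolding is_solution_def continuous_on_eq_continuous_within
  by (auto intro: DERIV_continuous)

text \<open>Both populations stay positive: up to the first time T where one of them vanishes, the
per-capita growth rates are bounded below, as the total population is bounded on [0, T].\<close>
lemma solution_pos:
  assumes sol: "is_solution r C tau x y nx ny" and "nx 0 > 0" "ny 0 > 0" "t \<ge> 0"
  shows "nx t > 0 \<and> ny t > 0"
proof (rule ccontr)
  let ?s = "alpha tau x y"
  define Z where "Z = {s \<in> {0..t}. min (nx s) (ny s) \<le> 0}"
  assume "\<not> (nx t > 0 \<and> ny t > 0)"
  then have "t \<in> Z" using \<open>t \<ge> 0\<close> by (auto simp: Z_def)
  moreover have "bdd_below Z" by (rule bdd_belowI[of _ 0]) (auto simp: Z_def)
  moreover have "closed Z" unfolding Z_def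
    using solution_continuous[OF sol]
    by (intro continuous_on_closed_Collect_le continuous_on_min continuous_on_const)
      (auto elim: continuous_on_subset)
  ultimately have TZ: "Inf Z \<in> Z" using closed_contains_Inf by blast
  define T where "T = Inf Z"
  have before: "nx s > 0 \<and> ny s > 0" if "0 \<le> s" "s < T" for s
  proof (rule ccontr)
    assume "\<not> (nx s > 0 \<and> ny s > 0)"
    then have "s \<in> Z" using that TZ by (auto simp: Z_def T_def)
    then have "T \<le> s" unfolding T_def using \<open>bdd_below Z\<close> by (rule cInf_lower)
    with that show False by simp
  qed
  have "T \<ge> 0" using TZ by (simp add: Z_def T_def)
  have cont_total: "continuous_on {0..T} (\<lambda>s. nx s + ny s)"
    using solution_continuous[OF sol]
    by (intro continuous_on_add) (auto elim: continuous_on_subset)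
  obtain M where M: "\<And>s. s \<in> {0..T} \<Longrightarrow> nx s + ny s \<le> M"
    using continuous_attains_sup[OF compact_Icc _ cont_total] \<open>T \<ge> 0\<close> by (metis ex_in_conv)
  define K where "K = \<bar>r x\<bar> + \<bar>r y\<bar> + \<bar>C\<bar> * M + \<bar>?s\<bar>"
  have mass: "C * nx s + C * ny s \<le> \<bar>C\<bar> * M" if "0 < s" "s < T" for s
  proof -
    have "C * nx s + C * ny s \<le> \<bar>C\<bar> * (nx s + ny s)"
      using before[of s] that by (simp add: distrib_left[symmetric] abs_le_iff)
    also have "\<dots> \<le> \<bar>C\<bar> * M" using M[of s] that by (intro mult_left_mono) auto
    finally show ?thesis .
  qed
  have "nx T > 0"
  proof (rule pos_of_growth_rate_bounded_below[where u = nx and K = K])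
    fix s assume "0 < s" "s < T"
    then show "r x - C * nx s - C * ny s + ?s / (nx s + ny s) * ny s \<ge> - K"
      using before[of s] mass[of s] abs_divide_sum_mult_le[of "nx s" "ny s" ?s]
      unfolding K_def by linarith
  qed (use \<open>T \<ge> 0\<close> \<open>nx 0 > 0\<close> solution_has_derivative(1)[OF sol] before in simp_all)
  moreover have "ny T > 0"
  proof (rule pos_of_growth_rate_bounded_below[where u = ny and K = K])
    fix s assume "0 < s" "s < T"
    then show "r y - C * nx s - C * ny s - ?s / (nx s + ny s) * nx s \<ge> - K"
      using before[of s] mass[of s] abs_divide_sum_mult_le[of "ny s" "nx s" ?s]
      unfolding K_def add.commute[of "ny s"] by linarith
  qed (use \<open>T \<ge> 0\<close> \<open>ny 0 > 0\<close> solution_has_derivative(2)[OF sol] before in simp_all)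
  ultimately show False using TZ by (auto simp: Z_def T_def)
qed

lemma solution_ratio:
  assumes sol: "is_solution r C tau x y nx ny" and "nx 0 > 0" "ny 0 > 0" "t \<ge> 0"
  shows "nx t / ny t = nx 0 / ny 0 * exp ((r x - r y + alpha tau x y) * t)"
proof -
  let ?d = "r x - r y + alpha tau x y"
  define q where "q s = nx s / ny s * exp (- ?d * s)" for s
  have "(q has_real_derivative 0) (at s within {0..})" if "s \<in> {0..}" for s
  proof -
    have "nx s > 0" "ny s > 0"
      using solution_pos[OF sol \<open>nx 0 > 0\<close> \<open>ny 0 > 0\<close>] that by auto
    then show ?thesis
      unfolding q_def using solution_has_derivative[OF sol, of s] that
      by (auto intro!: derivative_eq_intros simp: field_simps power2_eq_square)
  qed
  then obtain k where "\<And>s. s \<in> {0..} \<Longrightarrow> q s = k"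
    using has_field_derivative_zero_constant[of "{0..}" q] by auto
  then have "q t = q 0" using \<open>t \<ge> 0\<close> by simp
  then have "nx t / ny t * exp (- ?d * t) * exp (?d * t) = nx 0 / ny 0 * exp (?d * t)"
    by (simp add: q_def)
  moreover have "exp (- ?d * t) * exp (?d * t) = 1"
    by (simp add: exp_add[symmetric] algebra_simps)
  ultimately show ?thesis by (metis mult.assoc mult.right_neutral)
qed

lemma solution_inverse_total_has_derivative:
  assumes sol: "is_solution r C tau x y nx ny" and "nx 0 > 0" "ny 0 > 0" "t \<ge> 0"
  shows "((\<lambda>s. 1 / (nx s + ny s)) has_real_derivative
      C - (r y + (r x - r y) * (nx t / (nx t + ny t))) * (1 / (nx t + ny t))) (at t within {0..})"
proof -
  define N where "N = nx t + ny t"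
  have "nx t > 0" "ny t > 0"
    using solution_pos[OF sol \<open>nx 0 > 0\<close> \<open>ny 0 > 0\<close> \<open>t \<ge> 0\<close>] by auto
  then have "N > 0" by (simp add: N_def)
  have "((\<lambda>s. nx s + ny s) has_real_derivative
      (r x - C * nx t - C * ny t + alpha tau x y / (nx t + ny t) * ny t) * nx t
      + (r y - C * nx t - C * ny t - alpha tau x y / (nx t + ny t) * nx t) * ny t)
      (at t within {0..})"
    using solution_has_derivative[OF sol \<open>t \<ge> 0\<close>] by (rule DERIV_add)
  also have "(r x - C * nx t - C * ny t + alpha tau x y / (nx t + ny t) * ny t) * nx t
      + (r y - C * nx t - C * ny t - alpha tau x y / (nx t + ny t) * nx t) * ny t
      = r x * nx t + r y * (N - nx t) - C * N * N"
    by (simp add: N_def algebra_simps)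
  finally have "((\<lambda>s. nx s + ny s) has_real_derivative r x * nx t + r y * (N - nx t) - C * N * N)
      (at t within {0..})" .
  from DERIV_divide[OF DERIV_const[of 1] this] \<open>N > 0\<close>
  have "((\<lambda>s. 1 / (nx s + ny s)) has_real_derivative
      (0 * N - 1 * (r x * nx t + r y * (N - nx t) - C * N * N)) / (N * N)) (at t within {0..})"
    by (simp add: N_def)
  moreover have "(0 * N - 1 * (r x * nx t + r y * (N - nx t) - C * N * N)) / (N * N)
      = C - (r y + (r x - r y) * (nx t / N)) * (1 / N)"
    using \<open>N > 0\<close> by (simp add: field_simps)
  ultimately show ?thesis by (simp add: N_def)
qed

lemma solution_tendsto_boundary:
  assumes sol: "is_solution r C tau x y nx ny" and pos0: "nx 0 > 0" "ny 0 > 0"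
    and "r y > 0" "C > 0" and fitness: "r x - r y + alpha tau x y < 0"
  shows "(nx \<longlongrightarrow> 0) at_top \<and> (ny \<longlongrightarrow> r y / C) at_top"
proof -
  let ?d = "r x - r y + alpha tau x y"
  have pos: "nx t > 0 \<and> ny t > 0" if "t \<ge> 0" for t
    using solution_pos[OF sol pos0 that] .
  define p where "p t = nx t / (nx t + ny t)" for t
  have "(p \<longlongrightarrow> 0) at_top"
  proof (rule tendsto_sandwich[where f = "\<lambda>_. 0" and h = "\<lambda>t. nx 0 / ny 0 * exp (?d * t)"])
    have bound: "0 \<le> p t \<and> p t \<le> nx 0 / ny 0 * exp (?d * t)" if "t \<ge> 0" for t
    proof -
      have "p t \<le> nx t / ny t"
        unfolding p_def using pos[OF that] by (intro divide_left_mono) auto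
      then show ?thesis
        using pos[OF that] solution_ratio[OF sol pos0 that] by (simp add: p_def)
    qed
    have "\<forall>\<^sub>F t in at_top. 0 \<le> p t \<and> p t \<le> nx 0 / ny 0 * exp (?d * t)"
      using eventually_ge_at_top[of 0] by (rule eventually_mono) (rule bound)
    then show "\<forall>\<^sub>F t in at_top. 0 \<le> p t" "\<forall>\<^sub>F t in at_top. p t \<le> nx 0 / ny 0 * exp (?d * t)"
      by (simp_all add: eventually_conj_iff)
    show "((\<lambda>t. nx 0 / ny 0 * exp (?d * t)) \<longlongrightarrow> 0) at_top"
      using fitness by (rule tendsto_mult_exp_neg)
  qed simp
  then have "((\<lambda>t. r y + (r x - r y) * p t) \<longlongrightarrow> r y + (r x - r y) * 0) at_top"
    by (intro tendsto_intros)
  then have "((\<lambda>t. 1 / (nx t + ny t)) \<longlongrightarrow> C / r y) at_top"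
  proof (intro tendsto_of_linear_ode[OF \<open>r y > 0\<close>])
    fix t :: real assume "t \<ge> 0"
    then show "1 / (nx t + ny t) > 0" using pos[of t] by simp
    show "((\<lambda>t. 1 / (nx t + ny t)) has_real_derivative
        C - (r y + (r x - r y) * p t) * (1 / (nx t + ny t))) (at t within {0..})"
      unfolding p_def by (rule solution_inverse_total_has_derivative[OF sol pos0 \<open>t \<ge> 0\<close>])
  qed simp
  from tendsto_divide[OF tendsto_const this, of 1]
  have "((\<lambda>t. 1 / (1 / (nx t + ny t))) \<longlongrightarrow> 1 / (C / r y)) at_top"
    using \<open>r y > 0\<close> \<open>C > 0\<close> by simp
  then have total: "((\<lambda>t. nx t + ny t) \<longlongrightarrow> r y / C) at_top"
    by simp
  have "((\<lambda>t. (nx t + ny t) * p t) \<longlongrightarrow> r y / C * 0) at_top"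
    using total \<open>(p \<longlongrightarrow> 0) at_top\<close> by (rule tendsto_mult)
  moreover have "\<forall>\<^sub>F t in at_top. (nx t + ny t) * p t = nx t"
    using eventually_ge_at_top[of 0] by eventually_elim (use pos in \<open>force simp: p_def\<close>)
  ultimately have "(nx \<longlongrightarrow> 0) at_top"
    using tendsto_cong by force
  moreover from tendsto_diff[OF total this] have "(ny \<longlongrightarrow> r y / C) at_top"
    by simp
  ultimately show ?thesis ..
qed

theorem mainTheorem9:
  fixes r :: "'a \<Rightarrow> real" and tau Cf :: "'a \<Rightarrow> 'a \<Rightarrow> real"
    and C \<beta> \<mu> :: real and x y :: 'a
  assumes rpos: "r x > 0" "r y > 0"
    and tau_nonneg: "\<And>u v. tau u v \<ge> 0"
    and Cpos: "C > 0"
    and Cconst: "\<And>u v. u \<in> {x, y} \<Longrightarrow> v \<in> {x, y} \<Longrightarrow> Cf u v = C"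
    and beta: "\<beta> = 0" and mu: "\<mu> = 1"
    and Snz: "invasion_fitness r Cf tau \<beta> \<mu> y x \<noteq> 0"
  shows "invasion_fitness r Cf tau \<beta> \<mu> y x = r y - r x + alpha tau y x
       \<and> invasion_fitness r Cf tau \<beta> \<mu> y x = - invasion_fitness r Cf tau \<beta> \<mu> x y
       \<and> (\<forall>u v. u > 0 \<longrightarrow> v > 0 \<longrightarrow>
              \<not> (Pfun r C tau x y u v = 0 \<and> Qfun r C tau x y u v = 0))
       \<and> (\<forall>nx ny. is_solution r C tau x y nx ny \<longrightarrow> nx 0 > 0 \<longrightarrow> ny 0 > 0 \<longrightarrow>
              (invasion_fitness r Cf tau \<beta> \<mu> y x > 0 \<longrightarrow>
                  (nx \<longlongrightarrow> 0) at_top \<and> (ny \<longlongrightarrow> r y / C) at_top)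
            \<and> (invasion_fitness r Cf tau \<beta> \<mu> y x < 0 \<longrightarrow>
                  (nx \<longlongrightarrow> r x / C) at_top \<and> (ny \<longlongrightarrow> 0) at_top))"
proof -
  let ?S = "invasion_fitness r Cf tau \<beta> \<mu>"
  have S_yx: "?S y x = r y - r x + alpha tau y x"
    and S_xy: "?S x y = r x - r y + alpha tau x y"
    using Cconst Cpos rpos unfolding beta mu
    by (simp_all add: invasion_fitness_constant_competition)
  then have S_antisym: "?S y x = - ?S x y"
    by (simp add: alpha_swap[of tau y x])
  have no_equilibrium: "\<not> (Pfun r C tau x y u v = 0 \<and> Qfun r C tau x y u v = 0)"
    if "u > 0" "v > 0" for u v
  proof
    assume "Pfun r C tau x y u v = 0 \<and> Qfun r C tau x y u v = 0"
    then have "r x - r y + alpha tau x y = 0"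
      using equilibrium_imp_fitness_zero[where r = r and tau = tau and x = x and y = y, OF that]
      by blast
    with Snz S_xy S_antisym show False by simp
  qed
  have "(?S y x > 0 \<longrightarrow> (nx \<longlongrightarrow> 0) at_top \<and> (ny \<longlongrightarrow> r y / C) at_top)
      \<and> (?S y x < 0 \<longrightarrow> (nx \<longlongrightarrow> r x / C) at_top \<and> (ny \<longlongrightarrow> 0) at_top)"
    if sol: "is_solution r C tau x y nx ny" and "nx 0 > 0" "ny 0 > 0" for nx ny
    using solution_tendsto_boundary[OF sol \<open>nx 0 > 0\<close> \<open>ny 0 > 0\<close> rpos(2) Cpos]
      solution_tendsto_boundary[OF is_solution_swap[OF sol] \<open>ny 0 > 0\<close> \<open>nx 0 > 0\<close> rpos(1) Cpos]
      S_xy S_antisym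
    by (auto simp: alpha_swap[of tau y x])
  with S_yx S_antisym no_equilibrium show ?thesis by blast
qed

end
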